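(* Let $(S,+,\cdot)$ be a left inverse semi-brace and let $r_S$ be the map associated to $S$. Suppose that for all $a,b,c\in S$: (1) $(a+b)(a+b)^{-1}(a+bc)=a+bc$; (2) $\lambda_a(b)^{-1}+\lambda_{\rho_b(a)}(c)=\lambda_a(b)^{-1}+\lambda_{(a^{-1}+b)^{-1}}\lambda_b(c)$; (3) $\rho_b(a)^{-1}+c=(b^{-1}+c)\left(\rho_{\lambda_b(c)}(a)^{-1}+\rho_c(b)\right)$. Then $r_S$ is a solution of the Yang–Baxter equation.
   Context: An inverse semigroup is a semigroup $(S,\cdot)$ in which for each $a$ there is a unique $a^{-1}$ with $aa^{-1}a=a$ and $a^{-1}aa^{-1}=a^{-1}$. A left inverse semi-brace is a triple $(S,+,\cdot)$ where $(S,+)$ is a semigroup (not necessarily commutative), $(S,\cdot)$ is an inverse semigroup, and $a(b+c)=ab+a(a^{-1}+c)$ for all $a,b,c\in S$. For such $S$ set $\lambda_a(b)=a(a^{-1}+b)$ and $\rho_b(a)=(a^{-1}+b)^{-1}b$, and the map associated to $S$ is $r_S:S\times S\to S\times S$, $r_S(a,b)=(\lambda_a(b),\rho_b(a))$. A map $r:S\times S\to S\times S$ is a solution of the Yang–Baxter equation if $(r\times \mathrm{id}_S)(\mathrm{id}_S\times r)(r\times\mathrm{id}_S)=(\mathrm{id}_S\times r)(r\times\mathrm{id}_S)(\mathrm{id}_S\times r)$. *)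

theory Defs
  imports Main
begin

definition semigroup_op :: "('a \<Rightarrow> 'a \<Rightarrow> 'a) \<Rightarrow> bool" where
  "semigroup_op f \<longleftrightarrow> (\<forall>a b c. f (f a b) c = f a (f b c))"

definition inverse_semigroup :: "('a \<Rightarrow> 'a \<Rightarrow> 'a) \<Rightarrow> bool" where
  "inverse_semigroup m \<longleftrightarrow> semigroup_op m \<and>
     (\<forall>a. \<exists>!b. m (m a b) a = a \<and> m (m b a) b = b)"

definition sinv :: "('a \<Rightarrow> 'a \<Rightarrow> 'a) \<Rightarrow> 'a \<Rightarrow> 'a" where
  "sinv m a = (THE b. m (m a b) a = a \<and> m (m b a) b = b)"

definition left_inverse_semi_brace ::
  "('a \<Rightarrow> 'a \<Rightarrow> 'a) \<Rightarrow> ('a \<Rightarrow> 'a \<Rightarrow> 'a) \<Rightarrow> bool" where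
  "left_inverse_semi_brace add m \<longleftrightarrow> semigroup_op add \<and> inverse_semigroup m \<and>
     (\<forall>a b c. m a (add b c) = add (m a b) (m a (add (sinv m a) c)))"

definition lam :: "('a \<Rightarrow> 'a \<Rightarrow> 'a) \<Rightarrow> ('a \<Rightarrow> 'a \<Rightarrow> 'a) \<Rightarrow> 'a \<Rightarrow> 'a \<Rightarrow> 'a" where
  "lam add m a b = m a (add (sinv m a) b)"

definition rho :: "('a \<Rightarrow> 'a \<Rightarrow> 'a) \<Rightarrow> ('a \<Rightarrow> 'a \<Rightarrow> 'a) \<Rightarrow> 'a \<Rightarrow> 'a \<Rightarrow> 'a" where
  "rho add m b a = m (sinv m (add (sinv m a) b)) b"

definition r_map :: "('a \<Rightarrow> 'a \<Rightarrow> 'a) \<Rightarrow> ('a \<Rightarrow> 'a \<Rightarrow> 'a) \<Rightarrow> 'a \<times> 'a \<Rightarrow> 'a \<times> 'a" where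
  "r_map add m = (\<lambda>(a, b). (lam add m a b, rho add m b a))"

definition r12 :: "('a \<times> 'a \<Rightarrow> 'a \<times> 'a) \<Rightarrow> 'a \<times> 'a \<times> 'a \<Rightarrow> 'a \<times> 'a \<times> 'a" where
  "r12 r = (\<lambda>(x, y, z). let (u, v) = r (x, y) in (u, v, z))"

definition r23 :: "('a \<times> 'a \<Rightarrow> 'a \<times> 'a) \<Rightarrow> 'a \<times> 'a \<times> 'a \<Rightarrow> 'a \<times> 'a \<times> 'a" where
  "r23 r = (\<lambda>(x, y, z). let (v, w) = r (y, z) in (x, v, w))"

definition is_YBE_solution :: "('a \<times> 'a \<Rightarrow> 'a \<times> 'a) \<Rightarrow> bool" where
  "is_YBE_solution r \<longleftrightarrow> r12 r \<circ> r23 r \<circ> r12 r = r23 r \<circ> r12 r \<circ> r23 r"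

end

(*
  The braid relation for r(a, b) = (lambda_a b, rho_b a) splits into three identities, one per
  component. With p = x^-1 + y, hypothesis (2) and the semi-brace law rewrite
  lambda_x(y)^-1 + lambda_(rho_y x) z as p^-1 (x^-1 + lambda_y z), and hypothesis (1) says that the
  idempotent p p^-1 fixes x^-1 + lambda_y z; this settles the first component and, together with
  hypothesis (3), the second. The third follows from (3) and (a b)^-1 = b^-1 a^-1 alone.
*)
theory Submission
  imports Defs
begin

locale inv_semigroup =
  fixes mult :: "'a \<Rightarrow> 'a \<Rightarrow> 'a"  (infixl "\<cdot>" 70)
  assumes inverse_semigroup: "inverse_semigroup (\<cdot>)"
begin

abbreviation inverse_elem :: "'a \<Rightarrow> 'a"  ("_\<^sup>-\<^sup>1" [1000] 999)
  where "a\<^sup>-\<^sup>1 \<equiv> sinv (\<cdot>) a"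

lemma mult_assoc [simp]: "a \<cdot> b \<cdot> c = a \<cdot> (b \<cdot> c)"
  using inverse_semigroup unfolding inverse_semigroup_def semigroup_op_def by blast

lemma ex1_inverse: "\<exists>!b. a \<cdot> b \<cdot> a = a \<and> b \<cdot> a \<cdot> b = b"
  using inverse_semigroup unfolding inverse_semigroup_def by blast

lemma inverse_laws: "a \<cdot> a\<^sup>-\<^sup>1 \<cdot> a = a \<and> a\<^sup>-\<^sup>1 \<cdot> a \<cdot> a\<^sup>-\<^sup>1 = a\<^sup>-\<^sup>1"
  unfolding sinv_def by (rule theI'[OF ex1_inverse])

lemma mult_inverse_mult [simp]: "a \<cdot> (a\<^sup>-\<^sup>1 \<cdot> a) = a"
  and inverse_mult_inverse [simp]: "a\<^sup>-\<^sup>1 \<cdot> (a \<cdot> a\<^sup>-\<^sup>1) = a\<^sup>-\<^sup>1"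
  using inverse_laws by simp_all

lemma inverse_unique:
  assumes "a \<cdot> (b \<cdot> a) = a" and "b \<cdot> (a \<cdot> b) = b"
  shows "a\<^sup>-\<^sup>1 = b"
  using ex1_inverse inverse_laws assms by (metis mult_assoc)

lemma inverse_inverse [simp]: "(a\<^sup>-\<^sup>1)\<^sup>-\<^sup>1 = a"
  by (rule inverse_unique) simp_all

lemma idempotent_inverse:
  assumes "e \<cdot> e = e"
  shows "e\<^sup>-\<^sup>1 = e"
  by (rule inverse_unique) (simp_all flip: mult_assoc add: assms)

text \<open>The inverse x of e f satisfies f x e = x by uniqueness of inverses; hence x is idempotent,
  and therefore so is its inverse e f.\<close>
lemma idempotent_mult_idempotent:
  assumes e: "e \<cdot> e = e" and f: "f \<cdot> f = f"
  shows "e \<cdot> f \<cdot> (e \<cdot> f) = e \<cdot> f"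
proof -
  define x where "x = (e \<cdot> f)\<^sup>-\<^sup>1"
  have ef_x_ef: "e \<cdot> (f \<cdot> (x \<cdot> (e \<cdot> f))) = e \<cdot> f"
    and x_ef_x: "x \<cdot> (e \<cdot> (f \<cdot> x)) = x"
    using inverse_laws[of "e \<cdot> f"] by (simp_all add: x_def)
  have "(e \<cdot> f)\<^sup>-\<^sup>1 = f \<cdot> (x \<cdot> e)"
  proof (rule inverse_unique)
    show "e \<cdot> f \<cdot> (f \<cdot> (x \<cdot> e) \<cdot> (e \<cdot> f)) = e \<cdot> f"
      using ef_x_ef by (metis mult_assoc e f)
    show "f \<cdot> (x \<cdot> e) \<cdot> (e \<cdot> f \<cdot> (f \<cdot> (x \<cdot> e))) = f \<cdot> (x \<cdot> e)"
      using x_ef_x by (metis mult_assoc e f)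
  qed
  then have "x \<cdot> x = x"
    using x_ef_x x_def by (metis mult_assoc)
  then show ?thesis
    by (metis x_def idempotent_inverse inverse_inverse)
qed

lemma idempotents_commute:
  assumes "e \<cdot> e = e" and "f \<cdot> f = f"
  shows "e \<cdot> f = f \<cdot> e"
proof -
  have ef: "e \<cdot> f \<cdot> (e \<cdot> f) = e \<cdot> f" and fe: "f \<cdot> e \<cdot> (f \<cdot> e) = f \<cdot> e"
    using assms idempotent_mult_idempotent by blast+
  have "(e \<cdot> f)\<^sup>-\<^sup>1 = f \<cdot> e"
  proof (rule inverse_unique)
    show "e \<cdot> f \<cdot> (f \<cdot> e \<cdot> (e \<cdot> f)) = e \<cdot> f"
      using assms ef by (metis mult_assoc)
    show "f \<cdot> e \<cdot> (e \<cdot> f \<cdot> (f \<cdot> e)) = f \<cdot> e"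
      using assms fe by (metis mult_assoc)
  qed
  then show ?thesis
    using idempotent_inverse[OF ef] by simp
qed

lemma inverse_mult: "(a \<cdot> b)\<^sup>-\<^sup>1 = b\<^sup>-\<^sup>1 \<cdot> a\<^sup>-\<^sup>1"
proof (rule inverse_unique)
  have "b \<cdot> b\<^sup>-\<^sup>1 \<cdot> (a\<^sup>-\<^sup>1 \<cdot> a) = a\<^sup>-\<^sup>1 \<cdot> a \<cdot> (b \<cdot> b\<^sup>-\<^sup>1)"
    by (rule idempotents_commute) simp_all
  then show "a \<cdot> b \<cdot> (b\<^sup>-\<^sup>1 \<cdot> a\<^sup>-\<^sup>1 \<cdot> (a \<cdot> b)) = a \<cdot> b"
    and "b\<^sup>-\<^sup>1 \<cdot> a\<^sup>-\<^sup>1 \<cdot> (a \<cdot> b \<cdot> (b\<^sup>-\<^sup>1 \<cdot> a\<^sup>-\<^sup>1)) = b\<^sup>-\<^sup>1 \<cdot> a\<^sup>-\<^sup>1"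
    by (metis mult_assoc mult_inverse_mult inverse_mult_inverse)+
qed

lemma inverse_absorbs_idempotent:
  assumes "b \<cdot> (b\<^sup>-\<^sup>1 \<cdot> a) = a"
  shows "a\<^sup>-\<^sup>1 \<cdot> (b \<cdot> (b\<^sup>-\<^sup>1 \<cdot> c)) = a\<^sup>-\<^sup>1 \<cdot> c"
proof -
  have "a\<^sup>-\<^sup>1 = a\<^sup>-\<^sup>1 \<cdot> (b \<cdot> b\<^sup>-\<^sup>1)"
    using arg_cong[OF assms, of inverse_elem] by (simp add: inverse_mult)
  then show ?thesis
    by (metis mult_assoc)
qed

end

locale inv_semi_brace =
  fixes add :: "'a \<Rightarrow> 'a \<Rightarrow> 'a"  (infixl "\<oplus>" 65)
    and mult :: "'a \<Rightarrow> 'a \<Rightarrow> 'a"  (infixl "\<cdot>" 70)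
  assumes left_inverse_semi_brace: "left_inverse_semi_brace (\<oplus>) (\<cdot>)"
begin

sublocale inv_semigroup mult
  using left_inverse_semi_brace unfolding left_inverse_semi_brace_def by unfold_locales blast

abbreviation lam\<^sub>S :: "'a \<Rightarrow> 'a \<Rightarrow> 'a"
  where "lam\<^sub>S \<equiv> lam (\<oplus>) (\<cdot>)"

abbreviation rho\<^sub>S :: "'a \<Rightarrow> 'a \<Rightarrow> 'a"
  where "rho\<^sub>S \<equiv> rho (\<oplus>) (\<cdot>)"

lemma mult_add_distrib_left: "a \<cdot> (b \<oplus> c) = a \<cdot> b \<oplus> lam\<^sub>S a c"
  using left_inverse_semi_brace unfolding left_inverse_semi_brace_def lam_def by blast

lemma inverse_mult_add_lam: "(a \<cdot> b)\<^sup>-\<^sup>1 \<oplus> lam\<^sub>S (b\<^sup>-\<^sup>1) c = b\<^sup>-\<^sup>1 \<cdot> (a\<^sup>-\<^sup>1 \<oplus> c)"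
  by (simp add: mult_add_distrib_left inverse_mult)

lemma inverse_lam_add_lam_rho:
  assumes c2: "\<And>a b c. (lam\<^sub>S a b)\<^sup>-\<^sup>1 \<oplus> lam\<^sub>S (rho\<^sub>S b a) c
                 = (lam\<^sub>S a b)\<^sup>-\<^sup>1 \<oplus> lam\<^sub>S ((a\<^sup>-\<^sup>1 \<oplus> b)\<^sup>-\<^sup>1) (lam\<^sub>S b c)"
  shows "(lam\<^sub>S x y)\<^sup>-\<^sup>1 \<oplus> lam\<^sub>S (rho\<^sub>S y x) z = (x\<^sup>-\<^sup>1 \<oplus> y)\<^sup>-\<^sup>1 \<cdot> (x\<^sup>-\<^sup>1 \<oplus> lam\<^sub>S y z)"
proof -
  have "lam\<^sub>S x y = x \<cdot> (x\<^sup>-\<^sup>1 \<oplus> y)"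
    by (simp add: lam_def)
  then have "(lam\<^sub>S x y)\<^sup>-\<^sup>1 \<oplus> lam\<^sub>S ((x\<^sup>-\<^sup>1 \<oplus> y)\<^sup>-\<^sup>1) (lam\<^sub>S y z) = (x\<^sup>-\<^sup>1 \<oplus> y)\<^sup>-\<^sup>1 \<cdot> (x\<^sup>-\<^sup>1 \<oplus> lam\<^sub>S y z)"
    by (simp add: inverse_mult_add_lam)
  then show ?thesis
    unfolding c2 .
qed

lemma lam_lam_rho:
  assumes c1: "\<And>a b c. (a \<oplus> b) \<cdot> (a \<oplus> b)\<^sup>-\<^sup>1 \<cdot> (a \<oplus> b \<cdot> c) = a \<oplus> b \<cdot> c"
    and c2: "\<And>a b c. (lam\<^sub>S a b)\<^sup>-\<^sup>1 \<oplus> lam\<^sub>S (rho\<^sub>S b a) c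
                 = (lam\<^sub>S a b)\<^sup>-\<^sup>1 \<oplus> lam\<^sub>S ((a\<^sup>-\<^sup>1 \<oplus> b)\<^sup>-\<^sup>1) (lam\<^sub>S b c)"
  shows "lam\<^sub>S (lam\<^sub>S x y) (lam\<^sub>S (rho\<^sub>S y x) z) = lam\<^sub>S x (lam\<^sub>S y z)"
proof -
  let ?p = "x\<^sup>-\<^sup>1 \<oplus> y" and ?X = "x\<^sup>-\<^sup>1 \<oplus> lam\<^sub>S y z"
  have "lam\<^sub>S (lam\<^sub>S x y) (lam\<^sub>S (rho\<^sub>S y x) z) = lam\<^sub>S x y \<cdot> (?p\<^sup>-\<^sup>1 \<cdot> ?X)"
    by (simp only: lam_def[of _ _ "lam\<^sub>S x y"] inverse_lam_add_lam_rho[OF c2])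
  also have "\<dots> = x \<cdot> (?p \<cdot> (?p\<^sup>-\<^sup>1 \<cdot> ?X))"
    by (simp add: lam_def)
  also have "\<dots> = x \<cdot> ?X"
    using c1[of "x\<^sup>-\<^sup>1" y "y\<^sup>-\<^sup>1 \<oplus> z"] by (simp add: lam_def)
  also have "\<dots> = lam\<^sub>S x (lam\<^sub>S y z)"
    by (simp add: lam_def[of _ _ x "lam\<^sub>S y z"])
  finally show ?thesis .
qed

lemma rho_rho_lam:
  assumes c3: "\<And>a b c. (rho\<^sub>S b a)\<^sup>-\<^sup>1 \<oplus> c = (b\<^sup>-\<^sup>1 \<oplus> c) \<cdot> ((rho\<^sub>S (lam\<^sub>S b c) a)\<^sup>-\<^sup>1 \<oplus> rho\<^sub>S c b)"
  shows "rho\<^sub>S z (rho\<^sub>S y x) = rho\<^sub>S (rho\<^sub>S z y) (rho\<^sub>S (lam\<^sub>S y z) x)"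
proof -
  have "rho\<^sub>S z (rho\<^sub>S y x) = ((rho\<^sub>S y x)\<^sup>-\<^sup>1 \<oplus> z)\<^sup>-\<^sup>1 \<cdot> z"
    by (simp add: rho_def)
  also have "\<dots> = ((rho\<^sub>S (lam\<^sub>S y z) x)\<^sup>-\<^sup>1 \<oplus> rho\<^sub>S z y)\<^sup>-\<^sup>1 \<cdot> ((y\<^sup>-\<^sup>1 \<oplus> z)\<^sup>-\<^sup>1 \<cdot> z)"
    unfolding c3[where a = x and b = y and c = z] inverse_mult mult_assoc ..
  also have "\<dots> = rho\<^sub>S (rho\<^sub>S z y) (rho\<^sub>S (lam\<^sub>S y z) x)"
    by (simp add: rho_def)
  finally show ?thesis .
qed

lemma rho_lam_lam_rho:
  assumes c1: "\<And>a b c. (a \<oplus> b) \<cdot> (a \<oplus> b)\<^sup>-\<^sup>1 \<cdot> (a \<oplus> b \<cdot> c) = a \<oplus> b \<cdot> c"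
    and c2: "\<And>a b c. (lam\<^sub>S a b)\<^sup>-\<^sup>1 \<oplus> lam\<^sub>S (rho\<^sub>S b a) c
                 = (lam\<^sub>S a b)\<^sup>-\<^sup>1 \<oplus> lam\<^sub>S ((a\<^sup>-\<^sup>1 \<oplus> b)\<^sup>-\<^sup>1) (lam\<^sub>S b c)"
    and c3: "\<And>a b c. (rho\<^sub>S b a)\<^sup>-\<^sup>1 \<oplus> c = (b\<^sup>-\<^sup>1 \<oplus> c) \<cdot> ((rho\<^sub>S (lam\<^sub>S b c) a)\<^sup>-\<^sup>1 \<oplus> rho\<^sub>S c b)"
  shows "rho\<^sub>S (lam\<^sub>S (rho\<^sub>S y x) z) (lam\<^sub>S x y) = lam\<^sub>S (rho\<^sub>S (lam\<^sub>S y z) x) (rho\<^sub>S z y)"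
proof -
  let ?p = "x\<^sup>-\<^sup>1 \<oplus> y" and ?X = "x\<^sup>-\<^sup>1 \<oplus> lam\<^sub>S y z"
    and ?q = "rho\<^sub>S (lam\<^sub>S y z) x" and ?s = "rho\<^sub>S z y"
  have X: "?p \<cdot> (?p\<^sup>-\<^sup>1 \<cdot> ?X) = ?X"
    using c1[of "x\<^sup>-\<^sup>1" y "y\<^sup>-\<^sup>1 \<oplus> z"] by (simp add: lam_def)
  have lam_rho: "lam\<^sub>S (rho\<^sub>S y x) z = ?p\<^sup>-\<^sup>1 \<cdot> (lam\<^sub>S y z \<cdot> (?q\<^sup>-\<^sup>1 \<oplus> ?s))"
    unfolding lam_def[of _ _ "rho\<^sub>S y x" z] c3[where a = x and b = y and c = z]
    by (simp add: rho_def[of _ _ y x] lam_def[of _ _ y z])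
  have "rho\<^sub>S (lam\<^sub>S (rho\<^sub>S y x) z) (lam\<^sub>S x y)
      = ((lam\<^sub>S x y)\<^sup>-\<^sup>1 \<oplus> lam\<^sub>S (rho\<^sub>S y x) z)\<^sup>-\<^sup>1 \<cdot> lam\<^sub>S (rho\<^sub>S y x) z"
    by (simp only: rho_def)
  also have "\<dots> = (?p\<^sup>-\<^sup>1 \<cdot> ?X)\<^sup>-\<^sup>1 \<cdot> lam\<^sub>S (rho\<^sub>S y x) z"
    by (simp only: inverse_lam_add_lam_rho[OF c2])
  also have "\<dots> = ?X\<^sup>-\<^sup>1 \<cdot> (?p \<cdot> (?p\<^sup>-\<^sup>1 \<cdot> (lam\<^sub>S y z \<cdot> (?q\<^sup>-\<^sup>1 \<oplus> ?s))))"
    by (simp add: lam_rho inverse_mult)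
  also have "\<dots> = ?X\<^sup>-\<^sup>1 \<cdot> (lam\<^sub>S y z \<cdot> (?q\<^sup>-\<^sup>1 \<oplus> ?s))"
    by (rule inverse_absorbs_idempotent[OF X])
  also have "\<dots> = lam\<^sub>S ?q ?s"
    unfolding lam_def[of _ _ ?q ?s] by (simp add: rho_def[of _ _ "lam\<^sub>S y z" x])
  finally show ?thesis .
qed

end

lemma is_YBE_solution_iff:
  "is_YBE_solution (\<lambda>(a, b). (f a b, g b a)) \<longleftrightarrow>
    (\<forall>x y z. f (f x y) (f (g y x) z) = f x (f y z) \<and>
             g (f (g y x) z) (f x y) = f (g (f y z) x) (g z y) \<and>
             g z (g y x) = g (g z y) (g (f y z) x))"
  by (auto simp: is_YBE_solution_def r12_def r23_def fun_eq_iff)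

theorem theorem12:
  fixes add :: "'a \<Rightarrow> 'a \<Rightarrow> 'a" and m :: "'a \<Rightarrow> 'a \<Rightarrow> 'a"
  assumes brace: "left_inverse_semi_brace add m"
    and c1: "\<And>a b c. m (m (add a b) (sinv m (add a b))) (add a (m b c)) = add a (m b c)"
    and c2: "\<And>a b c. add (sinv m (lam add m a b)) (lam add m (rho add m b a) c)
                 = add (sinv m (lam add m a b))
                       (lam add m (sinv m (add (sinv m a) b)) (lam add m b c))"
    and c3: "\<And>a b c. add (sinv m (rho add m b a)) c
                 = m (add (sinv m b) c)
                     (add (sinv m (rho add m (lam add m b c) a)) (rho add m c b))"
  shows "is_YBE_solution (r_map add m)"
proof -
  interpret inv_semi_brace add m
    by unfold_locales (fact brace)
  show ?thesis
    unfolding r_map_def is_YBE_solution_iff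
    using lam_lam_rho[OF c1 c2] rho_lam_lam_rho[OF c1 c2 c3] rho_rho_lam[OF c3] by blast
qed

end
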